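(* If $f$ is $L$-smooth, then Muon with exact polar decomposition satisfies, for every $K\ge1$, $$\eta\sum_{k=0}^{K-1}\mathbb E\|\nabla f({\bm{X}}_k)\|_F\le f({\bm{X}}_0)-f_\star+\frac{Ld_0}{2}K\eta^2+\eta(1+\sqrt{d_0})\sum_{k=0}^{K-1}\mathbb E\|{\bm{S}}_k\|_F.$$
   Context: Norms on $\mathbb{R}^{m\times n}$: $\|\cdot\|_F$ Frobenius, $\|\cdot\|_{\mathrm{op}}$ spectral, $\|\cdot\|_*$ nuclear; $d_0:=\min\{m,n\}$. $f:\mathbb{R}^{m\times n}\to\mathbb R$ is differentiable with $f\ge f_\star>-\infty$; $L$-smooth means $\|\nabla f({\bm{X}})-\nabla f({\bm{Y}})\|_F\le L\|{\bm{X}}-{\bm{Y}}\|_F$ for all ${\bm{X}},{\bm{Y}}$. Muon: given $\beta\in(0,1)$, $\eta>0$, $B\in\mathbb N$, initial ${\bm{X}}_0,{\bm{C}}_{-1}$, for $k=0,1,\dots$: ${\bm{G}}_k=\frac1B\sum_{i=1}^B{\bm{G}}_k^i$ (stochastic gradient estimates), ${\bm{C}}_k=\beta{\bm{C}}_{k-1}+{\bm{G}}_k$, ${\bm{M}}_k=\beta{\bm{C}}_k+{\bm{G}}_k$, ${\bm{X}}_{k+1}={\bm{X}}_k-\eta\mathcal T({\bm{M}}_k)$, where with exact polar decomposition $\mathcal T({\bm{M}})={\bm{U}}{\bm{V}}^\top$ for a compact SVD ${\bm{M}}={\bm{U}}\bm\Sigma{\bm{V}}^\top$ ($\mathcal T(\mathbf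 0)=\mathbf 0$). $\widetilde{{\bm{M}}}_k:=(1-\beta){\bm{M}}_k$, ${\bm{S}}_k:=\widetilde{{\bm{M}}}_k-\nabla f({\bm{X}}_k)$. All expectations are assumed finite. *)

theory Defs
  imports "HOL-Analysis.Analysis" "HOL-Probability.Probability"
begin

text \<open>Real m x n matrices are modelled as real^'n^'m (entry (i,j) is M$i$j).
  The norm of this type is the Frobenius norm and its inner product the Frobenius inner product.\<close>

definition outer :: "real^'m \<Rightarrow> real^'n \<Rightarrow> real^'n^'m" where
  "outer u v = (\<chi> i j. u$i * v$j)"

text \<open>Compact SVD  M = U Sigma V^T  written as  M = sum_{i<r} sigma_i u_i v_i^T  with
  orthonormal columns u_0..u_{r-1}, v_0..v_{r-1} and positive singular values.\<close>
definition compact_svd ::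
  "real^'n^'m \<Rightarrow> nat \<Rightarrow> (nat \<Rightarrow> real^'m) \<Rightarrow> (nat \<Rightarrow> real^'n) \<Rightarrow> (nat \<Rightarrow> real) \<Rightarrow> bool" where
  "compact_svd M r u v \<sigma> \<longleftrightarrow>
     (\<forall>i<r. 0 < \<sigma> i) \<and>
     (\<forall>i<r. \<forall>j<r. inner (u i) (u j) = (if i = j then 1 else 0)) \<and>
     (\<forall>i<r. \<forall>j<r. inner (v i) (v j) = (if i = j then 1 else 0)) \<and>
     M = (\<Sum>i<r. \<sigma> i *\<^sub>R outer (u i) (v i))"

definition is_polar_op :: "(real^'n^'m \<Rightarrow> real^'n^'m) \<Rightarrow> bool" where
  "is_polar_op T \<longleftrightarrow> (\<forall>M. \<exists>r u v \<sigma>. compact_svd M r u v \<sigma> \<and> T M = (\<Sum>i<r. outer (u i) (v i)))"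

definition batch_grad :: "(nat \<Rightarrow> nat \<Rightarrow> 'w \<Rightarrow> real^'n^'m) \<Rightarrow> nat \<Rightarrow> 'w \<Rightarrow> nat \<Rightarrow> real^'n^'m" where
  "batch_grad G B \<omega> k = (1 / real B) *\<^sub>R (\<Sum>i=1..B. G k i \<omega>)"

text \<open>Muon state at step k: (X_k, C_{k-1}), given the mini-batch gradients Gb k = G_k.\<close>
fun muon_state ::
  "(real^'n^'m \<Rightarrow> real^'n^'m) \<Rightarrow> real \<Rightarrow> real \<Rightarrow> real^'n^'m \<Rightarrow> real^'n^'m
     \<Rightarrow> (nat \<Rightarrow> real^'n^'m) \<Rightarrow> nat \<Rightarrow> (real^'n^'m) \<times> (real^'n^'m)" where
  "muon_state T \<beta> \<eta> X0 Cm1 Gb 0 = (X0, Cm1)"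
| "muon_state T \<beta> \<eta> X0 Cm1 Gb (Suc k) =
     (let (X, C) = muon_state T \<beta> \<eta> X0 Cm1 Gb k;
          C' = \<beta> *\<^sub>R C + Gb k;
          M = \<beta> *\<^sub>R C' + Gb k
      in (X - \<eta> *\<^sub>R T M, C'))"

definition muon_X where
  "muon_X T \<beta> \<eta> X0 Cm1 Gb k = fst (muon_state T \<beta> \<eta> X0 Cm1 Gb k)"

definition muon_C where
  "muon_C T \<beta> \<eta> X0 Cm1 Gb k = \<beta> *\<^sub>R snd (muon_state T \<beta> \<eta> X0 Cm1 Gb k) + Gb k"

definition muon_M where
  "muon_M T \<beta> \<eta> X0 Cm1 Gb k = \<beta> *\<^sub>R muon_C T \<beta> \<eta> X0 Cm1 Gb k + Gb k"

end

theory Submission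
  imports Defs
begin

text \<open>Write \<open>O\<^sub>k = T(M\<^sub>k)\<close>, so that \<open>X\<^sub>k\<^sub>+\<^sub>1 = X\<^sub>k - \<eta> O\<^sub>k\<close>. For a compact SVD
  \<open>M = \<Sum> \<sigma>\<^sub>i u\<^sub>i v\<^sub>i\<^sup>T\<close> the rank-one matrices \<open>u\<^sub>i v\<^sub>i\<^sup>T\<close> are Frobenius-orthonormal, hence
  \<open>\<langle>M, T M\<rangle> = \<Sum> \<sigma>\<^sub>i \<ge> \<parallel>M\<parallel>\<^sub>F\<close> and \<open>\<parallel>T M\<parallel>\<^sub>F\<^sup>2 = rank M \<le> d\<^sub>0\<close>. Splitting
  \<open>\<nabla>f(X\<^sub>k) = (1 - \<beta>) M\<^sub>k - S\<^sub>k\<close> thus gives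
  \<open>\<langle>\<nabla>f(X\<^sub>k), O\<^sub>k\<rangle> \<ge> \<parallel>\<nabla>f(X\<^sub>k)\<parallel>\<^sub>F - (1 + \<surd>d\<^sub>0) \<parallel>S\<^sub>k\<parallel>\<^sub>F\<close>, and the descent lemma for
  \<open>L\<close>-smooth \<open>f\<close> yields, along every sample path,
  \<open>f(X\<^sub>k\<^sub>+\<^sub>1) \<le> f(X\<^sub>k) - \<eta> \<parallel>\<nabla>f(X\<^sub>k)\<parallel>\<^sub>F + \<eta> (1 + \<surd>d\<^sub>0) \<parallel>S\<^sub>k\<parallel>\<^sub>F + L d\<^sub>0 \<eta>\<^sup>2 / 2\<close>.
  Telescoping, using \<open>f \<ge> f\<^sub>\<star>\<close> and taking expectations gives the theorem.\<close>

lemma lipschitz_constant_nonneg: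
  fixes g :: "'a::euclidean_space \<Rightarrow> 'b::real_normed_vector"
  assumes "\<And>Y Z. norm (g Y - g Z) \<le> L * norm (Y - Z)"
  shows "0 \<le> L"
proof -
  obtain b :: 'a where "b \<in> Basis" using nonempty_Basis by blast
  then have "0 < norm b" by (simp add: nonzero_Basis)
  moreover have "0 \<le> L * norm (b - 0)"
    using assms[of b 0] norm_ge_zero order_trans by blast
  ultimately show ?thesis by (simp add: zero_le_mult_iff)
qed

lemma smooth_descent:
  fixes f :: "'a::real_inner \<Rightarrow> real"
  assumes grad: "\<And>Y. GDERIV f Y :> grad Y"
    and smooth: "\<And>Y Z. norm (grad Y - grad Z) \<le> L * norm (Y - Z)"
  shows "f Y \<le> f X + inner (grad X) (Y - X) + L / 2 * (norm (Y - X))\<^sup>2"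
proof -
  define D where "D = Y - X"
  define \<psi> where "\<psi> t = f (X + t *\<^sub>R D) - t * inner (grad X) D - L / 2 * t\<^sup>2 * (norm D)\<^sup>2" for t
  have df: "((\<lambda>t. f (X + t *\<^sub>R D)) has_real_derivative inner D (grad (X + t *\<^sub>R D))) (at t)" for t
  proof -
    have "((\<lambda>t. X + t *\<^sub>R D) has_derivative (\<lambda>h. h *\<^sub>R D)) (at t)"
      by (auto intro!: derivative_eq_intros)
    from has_derivative_compose[OF this grad[unfolded gderiv_def]]
    show ?thesis
      by (rule has_derivative_imp_has_field_derivative) simp
  qed
  have dpsi: "(\<psi> has_real_derivative
      inner D (grad (X + t *\<^sub>R D)) - inner (grad X) D - L * t * (norm D)\<^sup>2) (at t)" for t
    unfolding \<psi>_def by (rule derivative_eq_intros df refl | simp)+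
  have "\<psi> 1 \<le> \<psi> 0"
  proof (rule DERIV_nonpos_imp_decreasing_open[of 0 1 \<psi>])
    show "continuous_on {0..1} \<psi>"
      using dpsi by (meson DERIV_isCont continuous_at_imp_continuous_on)
    fix t :: real assume t: "0 < t" "t < 1"
    have "inner D (grad (X + t *\<^sub>R D)) - inner (grad X) D = inner (grad (X + t *\<^sub>R D) - grad X) D"
      by (simp add: inner_diff_left inner_diff_right inner_commute)
    also have "\<dots> \<le> norm (grad (X + t *\<^sub>R D) - grad X) * norm D"
      by (rule norm_cauchy_schwarz)
    also have "\<dots> \<le> L * norm (t *\<^sub>R D) * norm D"
      using smooth[of "X + t *\<^sub>R D" X] by (intro mult_right_mono) auto
    also have "\<dots> = L * t * (norm D)\<^sup>2"
      using t by (simp add: power2_eq_square)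
    finally show "\<exists>y. (\<psi> has_real_derivative y) (at t) \<and> y \<le> 0"
      using dpsi[of t] by force
  qed auto
  then show ?thesis unfolding \<psi>_def D_def by simp
qed

lemma inner_outer: "inner (outer a b) (outer c d) = inner a c * inner b d"
  unfolding outer_def inner_vec_def
  by (simp add: sum_product mult_ac, subst sum.swap, simp add: mult_ac)

lemma orthonormal_family_card_le_DIM:
  fixes u :: "nat \<Rightarrow> 'a::euclidean_space"
  assumes "\<forall>i<r. \<forall>j<r. inner (u i) (u j) = (if i = j then 1 else 0)"
  shows "r \<le> DIM('a)"
proof -
  have inj: "inj_on u {..<r}"
    by (rule inj_onI) (use assms in \<open>metis lessThan_iff zero_neq_one\<close>)
  have "pairwise orthogonal (u ` {..<r})"
    unfolding pairwise_def orthogonal_def using assms by auto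
  moreover have "0 \<notin> u ` {..<r}"
    using assms by auto (metis inner_zero_left zero_neq_one)
  ultimately have "independent (u ` {..<r})"
    by (rule pairwise_orthogonal_independent)
  then have "card (u ` {..<r}) \<le> DIM('a)"
    using independent_bound by blast
  then show ?thesis using card_image[OF inj] by simp
qed

lemma inner_sum_outer_orthonormal:
  fixes u :: "nat \<Rightarrow> real^'m" and v :: "nat \<Rightarrow> real^'n"
  assumes uo: "\<forall>i<r. \<forall>j<r. inner (u i) (u j) = (if i = j then 1 else 0)"
    and vo: "\<forall>i<r. \<forall>j<r. inner (v i) (v j) = (if i = j then 1 else 0)"
  shows "inner (\<Sum>i<r. a i *\<^sub>R outer (u i) (v i)) (\<Sum>j<r. b j *\<^sub>R outer (u j) (v j))
       = (\<Sum>i<r. a i * b i)"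
proof -
  have "inner (\<Sum>i<r. a i *\<^sub>R outer (u i) (v i)) (\<Sum>j<r. b j *\<^sub>R outer (u j) (v j))
      = (\<Sum>j<r. \<Sum>i<r. a i * b j * (inner (u i) (u j) * inner (v i) (v j)))"
    by (simp add: inner_sum_left inner_sum_right inner_outer sum_distrib_left mult_ac)
  also have "\<dots> = (\<Sum>j<r. \<Sum>i<r. if i = j then a i * b j else 0)"
    using uo vo by (intro sum.cong refl) simp
  also have "\<dots> = (\<Sum>j<r. a j * b j)"
    by (rule sum.cong[OF refl]) (simp add: sum.delta)
  finally show ?thesis .
qed

lemma polar_op_norm_le_inner:
  assumes "is_polar_op T"
  shows "norm M \<le> inner M (T M)"
proof -
  obtain r u v \<sigma> where svd: "compact_svd M r u v \<sigma>" and TM: "T M = (\<Sum>i<r. outer (u i) (v i))"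
    using assms unfolding is_polar_op_def by blast
  have pos: "\<forall>i<r. 0 < \<sigma> i"
    and uo: "\<forall>i<r. \<forall>j<r. inner (u i) (u j) = (if i = j then 1 else 0)"
    and vo: "\<forall>i<r. \<forall>j<r. inner (v i) (v j) = (if i = j then 1 else 0)"
    and M: "M = (\<Sum>i<r. \<sigma> i *\<^sub>R outer (u i) (v i))"
    using svd unfolding compact_svd_def by auto
  have "norm M \<le> (\<Sum>i<r. norm (\<sigma> i *\<^sub>R outer (u i) (v i)))"
    unfolding M by (rule norm_sum)
  also have "\<dots> = (\<Sum>i<r. \<sigma> i)"
    using pos uo vo by (intro sum.cong refl) (simp add: norm_eq_1[THEN iffD2] inner_outer less_imp_le)
  also have "\<dots> = inner M (T M)"
    using inner_sum_outer_orthonormal[OF uo vo, of \<sigma> "\<lambda>_. 1"] unfolding TM by (subst M) simp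
  finally show ?thesis .
qed

lemma polar_op_norm_sq_le:
  fixes T :: "real^'n^'m \<Rightarrow> real^'n^'m"
  assumes "is_polar_op T"
  shows "(norm (T M))\<^sup>2 \<le> real (min CARD('m) CARD('n))"
proof -
  obtain r u v \<sigma> where svd: "compact_svd M r u v \<sigma>" and TM: "T M = (\<Sum>i<r. outer (u i) (v i))"
    using assms unfolding is_polar_op_def by blast
  have uo: "\<forall>i<r. \<forall>j<r. inner (u i) (u j) = (if i = j then 1 else 0)"
    and vo: "\<forall>i<r. \<forall>j<r. inner (v i) (v j) = (if i = j then 1 else 0)"
    using svd unfolding compact_svd_def by auto
  have "(norm (T M))\<^sup>2 = real r"
    using inner_sum_outer_orthonormal[OF uo vo, of "\<lambda>_. 1" "\<lambda>_. 1"]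
    unfolding TM power2_norm_eq_inner by simp
  moreover have "r \<le> CARD('m)" and "r \<le> CARD('n)"
    using orthonormal_family_card_le_DIM[OF uo] orthonormal_family_card_le_DIM[OF vo] by simp_all
  ultimately show ?thesis by simp
qed

lemma polar_step_descent:
  fixes f :: "real^'n^'m \<Rightarrow> real" and T :: "real^'n^'m \<Rightarrow> real^'n^'m"
  defines "d \<equiv> real (min CARD('m) CARD('n))"
  assumes grad: "\<And>Y. GDERIV f Y :> grad Y"
    and smooth: "\<And>Y Z. norm (grad Y - grad Z) \<le> L * norm (Y - Z)"
    and polar: "is_polar_op T" and eta: "0 < \<eta>" and beta: "\<beta> < 1"
  shows "f (X - \<eta> *\<^sub>R T M) \<le> f X - \<eta> * norm (grad X)
      + \<eta> * (1 + sqrt d) * norm ((1 - \<beta>) *\<^sub>R M - grad X) + L * d / 2 * \<eta>\<^sup>2"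
proof -
  define Q where "Q = T M"
  define S where "S = (1 - \<beta>) *\<^sub>R M - grad X"
  have Q_sq: "(norm Q)\<^sup>2 \<le> d"
    unfolding Q_def d_def by (rule polar_op_norm_sq_le[OF polar])
  then have Q_norm: "norm Q \<le> sqrt d"
    using real_le_rsqrt by blast
  have "norm ((1 - \<beta>) *\<^sub>R M) \<le> inner ((1 - \<beta>) *\<^sub>R M) Q"
    using polar_op_norm_le_inner[OF polar, of M] beta unfolding Q_def
    by (simp add: mult_left_mono)
  moreover have "inner S Q \<le> norm S * sqrt d"
    using norm_cauchy_schwarz[of S Q] mult_left_mono[OF Q_norm norm_ge_zero[of S]] by linarith
  moreover have "norm (grad X) - norm S \<le> norm ((1 - \<beta>) *\<^sub>R M)"
    using norm_triangle_ineq4[of "(1 - \<beta>) *\<^sub>R M" S] unfolding S_def by simp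
  ultimately have "norm (grad X) - (1 + sqrt d) * norm S \<le> inner (grad X) Q"
    unfolding S_def by (simp add: inner_diff_left algebra_simps)
  from mult_left_mono[OF this less_imp_le[OF eta]]
  have first_order: "\<eta> * inner (grad X) Q \<ge> \<eta> * norm (grad X) - \<eta> * (1 + sqrt d) * norm S"
    by (simp add: algebra_simps)
  have "L / 2 * (\<eta>\<^sup>2 * (norm Q)\<^sup>2) \<le> L / 2 * (\<eta>\<^sup>2 * d)"
    using Q_sq lipschitz_constant_nonneg[OF smooth] by (intro mult_left_mono) auto
  moreover have "f (X - \<eta> *\<^sub>R Q) \<le> f X - \<eta> * inner (grad X) Q + L / 2 * (\<eta>\<^sup>2 * (norm Q)\<^sup>2)"
    using smooth_descent[OF grad smooth, of "X - \<eta> *\<^sub>R Q" X] eta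
    by (simp add: power_mult_distrib)
  ultimately show ?thesis
    using first_order unfolding Q_def S_def by (simp add: algebra_simps)
qed

lemma muon_X_Suc:
  "muon_X T \<beta> \<eta> X0 Cm1 Gb (Suc k)
     = muon_X T \<beta> \<eta> X0 Cm1 Gb k - \<eta> *\<^sub>R T (muon_M T \<beta> \<eta> X0 Cm1 Gb k)"
  unfolding muon_X_def muon_M_def muon_C_def by (simp add: Let_def split: prod.split)

lemma sum_le_telescope:
  fixes F a :: "nat \<Rightarrow> real"
  assumes "\<And>k. F (Suc k) \<le> F k - a k + c"
  shows "(\<Sum>k<N. a k) \<le> F 0 - F N + real N * c"
proof (induction N)
  case (Suc N)
  then show ?case using assms[of N] by (simp add: algebra_simps)
qed simp

lemma (in prob_space) expectation_sum_le_of_pointwise: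
  fixes a b :: "nat \<Rightarrow> 'a \<Rightarrow> real"
  assumes "\<And>k. integrable M (a k)" and "\<And>k. integrable M (b k)"
    and "\<And>\<omega>. \<eta> * (\<Sum>k<K. a k \<omega>) \<le> c + \<gamma> * (\<Sum>k<K. b k \<omega>)"
  shows "\<eta> * (\<Sum>k<K. expectation (a k)) \<le> c + \<gamma> * (\<Sum>k<K. expectation (b k))"
proof -
  have "(\<integral>\<omega>. \<eta> * (\<Sum>k<K. a k \<omega>) \<partial>M) \<le> (\<integral>\<omega>. c + \<gamma> * (\<Sum>k<K. b k \<omega>) \<partial>M)"
    using assms by (intro integral_mono) auto
  then show ?thesis
    using assms(1,2) by (simp add: prob_space)
qed

theorem mainTheorem11:
  fixes f :: "real^'n^'m \<Rightarrow> real"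
    and grad :: "real^'n^'m \<Rightarrow> real^'n^'m"
    and P :: "'w measure"
    and G :: "nat \<Rightarrow> nat \<Rightarrow> 'w \<Rightarrow> real^'n^'m"
    and T :: "real^'n^'m \<Rightarrow> real^'n^'m"
    and L fstar \<beta> \<eta> :: real and B K :: nat
    and X0 Cm1 :: "real^'n^'m"
  defines "d0 \<equiv> min CARD('m) CARD('n)"
    and "X \<equiv> (\<lambda>k \<omega>. muon_X T \<beta> \<eta> X0 Cm1 (batch_grad G B \<omega>) k)"
    and "S \<equiv> (\<lambda>k \<omega>. (1 - \<beta>) *\<^sub>R muon_M T \<beta> \<eta> X0 Cm1 (batch_grad G B \<omega>) k
                       - grad (muon_X T \<beta> \<eta> X0 Cm1 (batch_grad G B \<omega>) k))"
  assumes grad: "\<And>Y. GDERIV f Y :> grad Y"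
    and lower: "\<And>Y. fstar \<le> f Y"
    and smooth: "\<And>Y Z. norm (grad Y - grad Z) \<le> L * norm (Y - Z)"
    and polar: "is_polar_op T"
    and P: "prob_space P"
    and beta: "0 < \<beta>" "\<beta> < 1"
    and eta: "0 < \<eta>"
    and B: "1 \<le> B"
    and int_grad: "\<And>k. integrable P (\<lambda>\<omega>. norm (grad (X k \<omega>)))"
    and int_S: "\<And>k. integrable P (\<lambda>\<omega>. norm (S k \<omega>))"
    and K: "1 \<le> K"
  shows "\<eta> * (\<Sum>k<K. (\<integral>\<omega>. norm (grad (X k \<omega>)) \<partial>P))
         \<le> f X0 - fstar + L * real d0 / 2 * real K * \<eta>\<^sup>2
            + \<eta> * (1 + sqrt (real d0)) * (\<Sum>k<K. (\<integral>\<omega>. norm (S k \<omega>) \<partial>P))"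
proof -
  define c where "c = L * real d0 / 2 * \<eta>\<^sup>2"
  define \<gamma> where "\<gamma> = \<eta> * (1 + sqrt (real d0))"
  have step: "f (X (Suc k) \<omega>) \<le> f (X k \<omega>) - (\<eta> * norm (grad (X k \<omega>)) - \<gamma> * norm (S k \<omega>)) + c"
    for k \<omega>
    using polar_step_descent[OF grad smooth polar eta beta(2),
        of "X k \<omega>" "muon_M T \<beta> \<eta> X0 Cm1 (batch_grad G B \<omega>) k"]
    unfolding X_def S_def muon_X_Suc c_def \<gamma>_def d0_def by (simp add: algebra_simps)
  have pathwise: "\<eta> * (\<Sum>k<K. norm (grad (X k \<omega>)))
      \<le> f X0 - fstar + real K * c + \<gamma> * (\<Sum>k<K. norm (S k \<omega>))" for \<omega>
    using sum_le_telescope[where F = "\<lambda>k. f (X k \<omega>)", OF step, of K] lower[of "X K \<omega>"]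
    by (simp add: X_def muon_X_def sum_subtractf sum_distrib_left)
  have "\<eta> * (\<Sum>k<K. (\<integral>\<omega>. norm (grad (X k \<omega>)) \<partial>P))
      \<le> f X0 - fstar + real K * c + \<gamma> * (\<Sum>k<K. (\<integral>\<omega>. norm (S k \<omega>) \<partial>P))"
    using int_grad int_S pathwise
    by (rule prob_space.expectation_sum_le_of_pointwise[OF P,
          where a = "\<lambda>k \<omega>. norm (grad (X k \<omega>))" and b = "\<lambda>k \<omega>. norm (S k \<omega>)"])
  then show ?thesis
    unfolding c_def \<gamma>_def by (simp add: algebra_simps)
qed

end
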